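(* Let $a\in\mathbb{R}$, $x,y:\mathbb{N}_{a+1}\to\mathbb{R}$, $X(s)=\mathcal{N}_a\{x(k)\}$ and $Y(s)=\mathcal{N}_a\{y(k)\}$. Then $$\sum_{k=a+1}^{\infty}x(k)\,y^*(k)=\frac{1}{2\pi\mathrm{i}}\oint_c X(z)\,Y^*\Big(\frac{z^*}{z^*-1}\Big)(1-z)^{-1}\,\mathrm{d}z,$$ where $\zeta^*$ denotes complex conjugation, the sum is over $k=a+1,a+2,\dots$, and $c$ is a closed curve encircling the point $1$ (i.e. $(1,\mathrm{i}0)$) traversed clockwise and lying in the overlapping region of convergence of $X(z)$ and $Y^*\big(\frac{z^*}{z^*-1}\big)$.
   Context: For $a\in\mathbb{R}$, $\mathbb{N}_{a+1}=\{a+1,a+2,\dots\}$. For $f:\mathbb{N}_{a+1}\to\mathbb{C}$, the nabla Laplace transform ($N$-transform) is $\mathcal{N}_a\{f(k)\}=\sum_{k=1}^{\infty}(1-s)^{k-1}f(k+a)$, for those complex $s$ for which the series converges. Its inverse is given by $f(k)=\frac{1}{2\pi\mathrm{i}}\oint_c F(s)(1-s)^{-k+a}\,\mathrm{d}s$, $k\in\mathbb{N}_{a+1}$, with $c$ a clockwise closed curve around $1$ in the region of convergence of $F$. *)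

theory Defs
  imports "HOL-Complex_Analysis.Complex_Analysis"
begin

text \<open>Nabla Laplace transform: N_a{f}(s) = sum_{k>=1} (1-s)^(k-1) f(k+a),
  written with index j = k - 1 starting at 0.\<close>
definition N_transform :: "real \<Rightarrow> (real \<Rightarrow> real) \<Rightarrow> complex \<Rightarrow> complex" where
  "N_transform a f s = (\<Sum>j. (1 - s) ^ j * complex_of_real (f (a + real j + 1)))"

definition N_ROC :: "real \<Rightarrow> (real \<Rightarrow> real) \<Rightarrow> complex set" where
  "N_ROC a f = interior {s. summable (\<lambda>j. (1 - s) ^ j * complex_of_real (f (a + real j + 1)))}"

text \<open>Region of convergence of z \<mapsto> Y^*(z^*/(z^*-1)), where Y = N_a{y} and Y^* is its complex conjugate.\<close>
definition N_ROC_reflected :: "real \<Rightarrow> (real \<Rightarrow> real) \<Rightarrow> complex set" where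
  "N_ROC_reflected a f = interior {z. z \<noteq> 1 \<and>
      summable (\<lambda>j. (1 - cnj z / (cnj z - 1)) ^ j * complex_of_real (f (a + real j + 1)))}"

end

theory Submission
  imports Defs
begin

text \<open>
  Put w = 1 - z. Then X(z) = (SUM j. x(a+1+j) w^j) is a power series in w, and since
  1 - z*/(z*-1) = conj(1/w) and y is real, Y*(z*/(z*-1)) = (SUM l. y(a+1+l) w^(-l)).
  The curve is a compact subset of both regions of convergence, hence lies in an annulus
  r < |w| < R on which both series converge absolutely and uniformly. There the integrand is
  the Laurent series (SUM j l. x(a+1+j) y(a+1+l) w^(j-l-1)), which may be integrated term by
  term. Every power w^k with k \<noteq> -1 has a primitive and integrates to 0, whereas
  1/w = 1/(1-z) integrates to 2 pi i along a clockwise curve around 1; so exactly the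
  diagonal terms j = l survive.
\<close>

subsection \<open>Term-by-term contour integration of Laurent series in 1 - z\<close>

definition annulus :: "complex \<Rightarrow> real \<Rightarrow> real \<Rightarrow> complex set" where
  "annulus z0 r R = {z. r < dist z0 z \<and> dist z0 z < R}"

lemma open_annulus: "open (annulus z0 r R)"
  unfolding annulus_def by (intro open_Collect_conj open_Collect_less continuous_intros)

lemma annulus_1D:
  assumes "z \<in> annulus 1 r R" "0 < r"
  shows "z \<noteq> 1" "norm (1 - z) \<le> R" "norm (inverse (1 - z)) \<le> inverse r"
  using assms by (auto simp: annulus_def dist_norm norm_inverse intro!: le_imp_inverse_le)

lemma has_contour_integral_power_int_one_minus:
  fixes c :: "real \<Rightarrow> complex" and k :: int
  assumes c: "valid_path c" "pathfinish c = pathstart c" "1 \<notin> path_image c"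
  shows "((\<lambda>z. (1 - z) powi k) has_contour_integral
           (if k = -1 then - (2 * pi * \<i> * winding_number c 1) else 0)) c"
proof (cases "k = -1")
  case True
  have "((\<lambda>z. 1 / (z - 1)) has_contour_integral 2 * pi * \<i> * winding_number c 1) c"
    using c by (intro has_contour_integral_winding_number) auto
  from has_contour_integral_neg[OF this]
  have "((\<lambda>z. (1 - z) powi -1) has_contour_integral - (2 * pi * \<i> * winding_number c 1)) c"
    by (rule has_contour_integral_eq) (simp add: power_int_minus inverse_eq_divide minus_divide_right)
  with True show ?thesis by simp
next
  case False
  then have "(of_int (k + 1) :: complex) \<noteq> 0"
    by (metis add.commute add_eq_0_iff2 of_int_eq_0_iff)
  then have "((\<lambda>z. (1 - z) powi (k + 1) / - of_int (k + 1)) has_field_derivative (1 - z) powi k)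
          (at z within - {1})" if "z \<in> - {1}" for z :: complex
    using that by (auto intro!: derivative_eq_intros simp del: of_int_add)
  then have "((\<lambda>z. (1 - z) powi k) has_contour_integral 0) c"
    using c by (intro Cauchy_theorem_primitive[of "- {1}"]) auto
  with False show ?thesis by simp
qed

lemma holomorphic_on_suminf:
  assumes S: "open S" and hol: "\<And>n. f n holomorphic_on S"
    and bound: "\<And>n z. z \<in> S \<Longrightarrow> norm (f n z) \<le> M n" and M: "summable M"
  shows "(\<lambda>z. \<Sum>n. f n z) holomorphic_on S"
proof (rule holomorphic_uniform_sequence[OF S])
  show "(\<lambda>z. \<Sum>i<n. f i z) holomorphic_on S" for n
    using hol by (intro holomorphic_intros)
  have ul: "uniform_limit S (\<lambda>n z. \<Sum>i<n. f i z) (\<lambda>z. \<Sum>n. f n z) sequentially"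
    by (rule Weierstrass_m_test[OF bound M])
  fix z assume "z \<in> S"
  then obtain d where "0 < d" "cball z d \<subseteq> S"
    using S open_contains_cball by blast
  then show "\<exists>d>0. cball z d \<subseteq> S \<and>
      uniform_limit (cball z d) (\<lambda>n z. \<Sum>i<n. f i z) (\<lambda>z. \<Sum>n. f n z) sequentially"
    using uniform_limit_on_subset[OF ul] by blast
qed

lemma sums_contour_integral_suminf:
  assumes S: "open S" and c: "valid_path c" "path_image c \<subseteq> S"
    and hol: "\<And>n. f n holomorphic_on S"
    and bound: "\<And>n z. z \<in> S \<Longrightarrow> norm (f n z) \<le> M n" and M: "summable M"
  shows "(\<lambda>n. contour_integral c (f n)) sums contour_integral c (\<lambda>z. \<Sum>n. f n z)"
proof -
  define F where "F n z = (\<Sum>i<n. f i z)" for n z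
  define l where "l z = (\<Sum>n. f n z)" for z
  have holF: "F n holomorphic_on S" for n
    unfolding F_def using hol by (intro holomorphic_intros)
  have holl: "l holomorphic_on S"
    unfolding l_def by (rule holomorphic_on_suminf[OF S hol bound M])
  have ul: "uniform_limit S F l sequentially"
    unfolding F_def l_def by (rule Weierstrass_m_test[OF bound M])
  have integrable: "g contour_integrable_on c" if "g holomorphic_on S" for g
    using contour_integrable_holomorphic_simple[OF that S c] .
  obtain L where L: "0 < L" and LB: "\<And>g B. g holomorphic_on S \<Longrightarrow> \<forall>z\<in>S. norm (g z) \<le> B
      \<Longrightarrow> norm (contour_integral c g) \<le> L * B"
    using contour_integral_bound_exists[OF S c] by blast
  have "(\<lambda>n. contour_integral c (F n)) \<longlonglongrightarrow> contour_integral c l"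
  proof (rule tendstoI)
    fix e :: real assume e: "0 < e"
    have "\<forall>\<^sub>F n in sequentially. \<forall>z\<in>S. dist (F n z) (l z) < e / (2 * L)"
      using uniform_limitD[OF ul] e L by simp
    then show "\<forall>\<^sub>F n in sequentially. dist (contour_integral c (F n)) (contour_integral c l) < e"
    proof eventually_elim
      case (elim n)
      have "contour_integral c (F n) - contour_integral c l = contour_integral c (\<lambda>z. F n z - l z)"
        using holF holl by (intro contour_integral_diff[symmetric] integrable)
      also have "norm \<dots> \<le> L * (e / (2 * L))"
        using elim holF holl by (intro LB holomorphic_intros) (auto simp: dist_norm)
      also have "\<dots> < e" using L e by simp
      finally show ?case by (simp add: dist_norm)
    qed
  qed
  moreover have "contour_integral c (F n) = (\<Sum>i<n. contour_integral c (f i))" for n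
    unfolding F_def using hol by (intro contour_integral_sum integrable) auto
  ultimately show ?thesis
    unfolding sums_def l_def by simp
qed

lemma norm_mult_inverse_power_le:
  assumes "z \<in> annulus 1 r R" "0 < r"
  shows "norm (q * inverse (1 - z) ^ n) \<le> norm q * inverse r ^ n"
  unfolding norm_mult norm_power
  using annulus_1D[OF assms] by (intro mult_left_mono power_mono) auto

lemma power_mult_inverse_power_eq_power_int:
  fixes w :: complex
  assumes "w \<noteq> 0"
  shows "w ^ j * inverse w ^ l = w powi (int j - int l)"
  using assms by (simp add: power_int_diff power_int_of_nat divide_inverse power_inverse)

lemma summable_mult_power_in_annulus:
  fixes a :: "nat \<Rightarrow> complex"
  assumes "z \<in> annulus 1 r R" "0 < r"
  shows "summable (\<lambda>l. norm (a l) * R ^ l) \<Longrightarrow> summable (\<lambda>l. a l * (1 - z) ^ l)"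
    and "summable (\<lambda>l. norm (a l) * inverse r ^ l) \<Longrightarrow> summable (\<lambda>l. a l * inverse (1 - z) ^ l)"
proof -
  show "summable (\<lambda>l. a l * (1 - z) ^ l)" if "summable (\<lambda>l. norm (a l) * R ^ l)"
    using annulus_1D[OF assms]
    by (intro summable_comparison_test'[OF that])
       (auto simp: norm_mult norm_power intro!: mult_left_mono power_mono)
  show "summable (\<lambda>l. a l * inverse (1 - z) ^ l)" if "summable (\<lambda>l. norm (a l) * inverse r ^ l)"
    using norm_mult_inverse_power_le[OF assms] by (intro summable_comparison_test'[OF that])
qed

lemma contour_integral_power_mult_principal_part:
  fixes q :: "nat \<Rightarrow> complex"
  assumes c: "valid_path c" "pathfinish c = pathstart c" "path_image c \<subseteq> annulus 1 r R"
    and r: "0 < r" and q: "summable (\<lambda>l. norm (q l) * inverse r ^ l)"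
  shows "contour_integral c (\<lambda>z. (1 - z) ^ j * (\<Sum>l. q l * inverse (1 - z) ^ Suc l))
           = - (2 * pi * \<i> * winding_number c 1) * q j"
proof -
  define f where "f l z = (1 - z) ^ j * (q l * inverse (1 - z) ^ Suc l)" for l z
  have one_notin: "1 \<notin> path_image c"
    using c(3) annulus_1D[OF _ r] by blast
  have bound: "norm (f l z) \<le> R ^ j * (norm (q l) * inverse r ^ Suc l)"
    if "z \<in> annulus 1 r R" for l z
  proof -
    have "norm (1 - z) \<le> R" "0 \<le> R"
      using annulus_1D(2)[OF that r] norm_ge_zero order_trans by blast+
    then show ?thesis
      unfolding f_def norm_mult[of "(1 - z) ^ j"] norm_power
      using norm_mult_inverse_power_le[OF that r, of "q l" "Suc l"]
      by (intro mult_mono power_mono) (auto simp del: power_Suc)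
  qed
  have summable_bound: "summable (\<lambda>l. R ^ j * (norm (q l) * inverse r ^ Suc l))"
    using summable_mult2[OF q, of "inverse r"] by (intro summable_mult) (simp add: mult_ac)
  have hol: "f l holomorphic_on annulus 1 r R" for l
    unfolding f_def by (intro holomorphic_intros) (auto dest: annulus_1D[OF _ r])
  have "contour_integral c (f l) = (if l = j then - (2 * pi * \<i> * winding_number c 1) * q j else 0)"
    for l
  proof -
    have "((\<lambda>z. q l * (1 - z) powi (int j - int (Suc l))) has_contour_integral
            q l * (if int j - int (Suc l) = -1 then - (2 * pi * \<i> * winding_number c 1) else 0)) c"
      by (intro has_contour_integral_lmul has_contour_integral_power_int_one_minus c one_notin)
    then have "(f l has_contour_integral
            q l * (if int j - int (Suc l) = -1 then - (2 * pi * \<i> * winding_number c 1) else 0)) c"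
    proof (rule has_contour_integral_eq)
      fix z assume "z \<in> path_image c"
      then have "1 - z \<noteq> 0" using one_notin by auto
      then show "q l * (1 - z) powi (int j - int (Suc l)) = f l z"
        unfolding f_def mult.left_commute[of "(1 - z) ^ j"]
        by (simp only: power_mult_inverse_power_eq_power_int[OF \<open>1 - z \<noteq> 0\<close>])
    qed
    then show ?thesis
      by (auto dest: contour_integral_unique)
  qed
  then have "(\<lambda>l. if l = j then - (2 * pi * \<i> * winding_number c 1) * q j else 0) sums
               contour_integral c (\<lambda>z. \<Sum>l. f l z)"
    using sums_contour_integral_suminf[OF open_annulus c(1,3) hol bound summable_bound] by simp
  moreover have "(\<lambda>l. if l = j then - (2 * pi * \<i> * winding_number c 1) * q j else 0) sums
                   (- (2 * pi * \<i> * winding_number c 1) * q j)"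
    using sums_single[of j "\<lambda>_. - (2 * pi * \<i> * winding_number c 1) * q j"] by simp
  ultimately have "contour_integral c (\<lambda>z. \<Sum>l. f l z) = - (2 * pi * \<i> * winding_number c 1) * q j"
    by (rule sums_unique2)
  moreover have "contour_integral c (\<lambda>z. (1 - z) ^ j * (\<Sum>l. q l * inverse (1 - z) ^ Suc l))
                   = contour_integral c (\<lambda>z. \<Sum>l. f l z)"
  proof (rule contour_integral_eq)
    fix z assume "z \<in> path_image c"
    then have "z \<in> annulus 1 r R" using c(3) by blast
    have "summable (\<lambda>l. q l * inverse (1 - z) ^ Suc l)"
      using summable_mult2[OF summable_mult_power_in_annulus(2)[OF \<open>z \<in> annulus 1 r R\<close> r q],
                      of "inverse (1 - z)"]
      by (simp add: mult_ac)
    then show "(1 - z) ^ j * (\<Sum>l. q l * inverse (1 - z) ^ Suc l) = (\<Sum>l. f l z)"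
      unfolding f_def by (rule suminf_mult[symmetric])
  qed
  ultimately show ?thesis by simp
qed

lemma sums_contour_integral_laurent_product:
  fixes p q :: "nat \<Rightarrow> complex"
  assumes c: "valid_path c" "pathfinish c = pathstart c" "path_image c \<subseteq> annulus 1 r R"
    and r: "0 < r" and p: "summable (\<lambda>j. norm (p j) * R ^ j)"
    and q: "summable (\<lambda>l. norm (q l) * inverse r ^ l)"
  shows "(\<lambda>j. - (2 * pi * \<i> * winding_number c 1) * (p j * q j)) sums
           contour_integral c (\<lambda>z. (\<Sum>j. p j * (1 - z) ^ j) * (\<Sum>l. q l * inverse (1 - z) ^ l)
                                   * inverse (1 - z))"
proof -
  define G where "G z = (\<Sum>l. q l * inverse (1 - z) ^ Suc l)" for z
  define B where "B = (\<Sum>l. norm (q l) * inverse r ^ Suc l)"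
  define f where "f j z = p j * ((1 - z) ^ j * G z)" for j z
  have q_Suc: "summable (\<lambda>l. norm (q l) * inverse r ^ Suc l)"
    using summable_mult2[OF q, of "inverse r"] by (simp add: mult_ac)
  have tail_bound: "norm (q l * inverse (1 - z) ^ Suc l) \<le> norm (q l) * inverse r ^ Suc l"
    if "z \<in> annulus 1 r R" for l z
    using norm_mult_inverse_power_le[OF that r] .
  have holG: "G holomorphic_on annulus 1 r R"
    unfolding G_def
    by (rule holomorphic_on_suminf[OF open_annulus _ tail_bound q_Suc])
       (auto intro!: holomorphic_intros dest: annulus_1D[OF _ r])
  have bound: "norm (f j z) \<le> norm (p j) * R ^ j * B" if "z \<in> annulus 1 r R" for j z
  proof -
    have "norm (G z) \<le> B"
      unfolding G_def B_def by (rule norm_suminf_le[OF tail_bound[OF that] q_Suc])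
    moreover have "norm (1 - z) ^ j \<le> R ^ j" "0 \<le> R"
      using annulus_1D(2)[OF that r] norm_ge_zero order_trans by (blast intro: power_mono)+
    ultimately have "norm (1 - z) ^ j * norm (G z) \<le> R ^ j * B"
      by (intro mult_mono) auto
    then show ?thesis
      unfolding f_def norm_mult norm_power mult.assoc by (intro mult_left_mono) auto
  qed
  have hol: "f j holomorphic_on annulus 1 r R" for j
    unfolding f_def using holG by (intro holomorphic_intros)
  have "(\<lambda>j. contour_integral c (f j)) sums contour_integral c (\<lambda>z. \<Sum>j. f j z)"
    by (rule sums_contour_integral_suminf[OF open_annulus c(1,3) hol bound summable_mult2[OF p]])
  moreover have "contour_integral c (f j) = - (2 * pi * \<i> * winding_number c 1) * (p j * q j)" for j
  proof -
    have integrable: "(\<lambda>z. (1 - z) ^ j * G z) contour_integrable_on c"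
      using holG by (intro contour_integrable_holomorphic_simple[OF _ open_annulus c(1,3)]
                       holomorphic_intros)
    have "contour_integral c (f j) = p j * contour_integral c (\<lambda>z. (1 - z) ^ j * G z)"
      unfolding f_def by (rule contour_integral_lmul[OF integrable])
    also have "\<dots> = p j * (- (2 * pi * \<i> * winding_number c 1) * q j)"
      unfolding G_def contour_integral_power_mult_principal_part[OF c r q] ..
    finally show ?thesis by (simp only: mult_ac)
  qed
  moreover have "(\<Sum>j. f j z) = (\<Sum>j. p j * (1 - z) ^ j) * (\<Sum>l. q l * inverse (1 - z) ^ l)
                                  * inverse (1 - z)" if "z \<in> path_image c" for z
  proof -
    have z: "z \<in> annulus 1 r R" using that c(3) by blast
    have "(\<Sum>l. q l * inverse (1 - z) ^ l) * inverse (1 - z) = G z"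
      unfolding G_def power_Suc2 mult.assoc[symmetric]
      by (rule suminf_mult2[OF summable_mult_power_in_annulus(2)[OF z r q]])
    moreover have "(\<Sum>j. p j * (1 - z) ^ j) * G z = (\<Sum>j. f j z)"
      unfolding f_def mult.assoc[symmetric]
      by (rule suminf_mult2[OF summable_mult_power_in_annulus(1)[OF z r p]])
    ultimately show ?thesis by (simp add: mult.assoc)
  qed
  ultimately show ?thesis
    by (simp cong: contour_integral_eq)
qed

subsection \<open>Power series converging on a compact set\<close>

lemma norm_less_conv_radius_if_open:
  fixes p :: "nat \<Rightarrow> complex"
  assumes U: "open U" "w \<in> U" and summable: "\<And>u. u \<in> U \<Longrightarrow> summable (\<lambda>j. p j * u ^ j)"
  shows "ereal (norm w) < conv_radius p"
proof -
  obtain e where e: "0 < e" "ball w e \<subseteq> U"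
    using U open_contains_ball by blast
  define d where "d = (if w = 0 then 1 else w / of_real (norm w))"
  have d: "norm d = 1" "w = of_real (norm w) * d"
    by (auto simp: d_def norm_divide)
  define u where "u = of_real (norm w + e / 2) * d"
  have "u = of_real (norm w) * d + of_real (e / 2) * d"
    by (simp add: u_def distrib_right)
  then have "dist w u = e / 2"
    using e(1) by (simp add: dist_norm norm_mult d(1) flip: d(2))
  then have "u \<in> U" using e by auto
  have "norm u = norm w + e / 2"
    unfolding u_def norm_mult d(1) norm_of_real using e(1) by simp
  then have "ereal (norm w + e / 2) \<le> conv_radius p"
    using conv_radius_geI[OF summable[OF \<open>u \<in> U\<close>]] by simp
  moreover have "ereal (norm w) < ereal (norm w + e / 2)"
    using e(1) by simp
  ultimately show ?thesis
    by (rule order.strict_trans2[rotated])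
qed

lemma powser_abs_summable_beyond_compact:
  fixes p :: "nat \<Rightarrow> complex" and f :: "'a::topological_space \<Rightarrow> complex"
  assumes K: "compact K" "K \<noteq> {}" and f: "continuous_on K f"
    and inside: "\<And>z. z \<in> K \<Longrightarrow> ereal (norm (f z)) < conv_radius p"
  obtains \<rho> where "\<And>z. z \<in> K \<Longrightarrow> norm (f z) < \<rho>" "summable (\<lambda>j. norm (p j) * \<rho> ^ j)"
proof -
  obtain z0 where z0: "z0 \<in> K" and max: "\<And>z. z \<in> K \<Longrightarrow> norm (f z) \<le> norm (f z0)"
    using continuous_attains_sup[OF K continuous_on_norm[OF f]] by blast
  obtain \<rho> where \<rho>: "norm (f z0) < \<rho>" "ereal \<rho> < conv_radius p"
    using ereal_dense2[OF inside[OF z0]] by auto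
  have "0 \<le> \<rho>"
    using \<rho>(1) norm_ge_zero order.trans by (metis less_imp_le)
  have "norm (p j * of_real \<rho> ^ j) = norm (p j) * \<rho> ^ j" for j
    using \<open>0 \<le> \<rho>\<close> by (simp add: norm_mult norm_power)
  moreover have "summable (\<lambda>j. norm (p j * of_real \<rho> ^ j))"
    using \<rho>(2) \<open>0 \<le> \<rho>\<close> by (intro abs_summable_in_conv_radius) simp
  ultimately have "summable (\<lambda>j. norm (p j) * \<rho> ^ j)"
    by simp
  moreover have "norm (f z) < \<rho>" if "z \<in> K" for z
    using max[OF that] \<rho>(1) by linarith
  ultimately show ?thesis
    using that by blast
qed

lemma open_image_inverse_one_minus:
  fixes U :: "complex set"
  assumes "open U" "1 \<notin> U"
  shows "open ((\<lambda>z. inverse (1 - z)) ` U)"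
proof -
  have "(\<lambda>z. inverse (1 - z)) ` U = - {0} \<inter> (\<lambda>w. 1 - inverse w) -` U"
  proof (intro equalityI subsetI)
    fix w assume "w \<in> - {0} \<inter> (\<lambda>w. 1 - inverse w) -` U"
    then show "w \<in> (\<lambda>z. inverse (1 - z)) ` U"
      by (intro image_eqI[of _ _ "1 - inverse w"]) auto
  qed (use assms(2) in \<open>auto simp: right_diff_distrib\<close>)
  moreover have "continuous_on (- {0}) (\<lambda>w. 1 - inverse w :: complex)"
    by (intro continuous_intros) auto
  ultimately show ?thesis
    using continuous_open_preimage[OF _ open_Compl[OF closed_singleton] assms(1)] by simp
qed

lemma summable_cnj_iff: "summable (\<lambda>n. cnj (f n)) \<longleftrightarrow> summable f"
  by (metis sums_cnj complex_cnj_cnj summable_def)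

lemma suminf_cnj: "summable f \<Longrightarrow> (\<Sum>n. cnj (f n)) = cnj (suminf f)"
  by (metis sums_cnj sums_unique summable_sums)

subsection \<open>The nabla Laplace transform as a power series in 1 - s\<close>

definition N_coeffs :: "real \<Rightarrow> (real \<Rightarrow> real) \<Rightarrow> nat \<Rightarrow> complex" where
  "N_coeffs a f j = complex_of_real (f (a + real j + 1))"

lemma N_transform_eq_powser: "N_transform a f s = (\<Sum>j. N_coeffs a f j * (1 - s) ^ j)"
  by (simp add: N_transform_def N_coeffs_def mult.commute)

lemma N_ROC_eq_interior_powser:
  "N_ROC a f = interior {s. summable (\<lambda>j. N_coeffs a f j * (1 - s) ^ j)}"
  by (simp add: N_ROC_def N_coeffs_def mult.commute)

lemma N_reflected_terms_eq_cnj: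
  assumes "z \<noteq> 1"
  shows "(\<lambda>j. (1 - cnj z / (cnj z - 1)) ^ j * complex_of_real (f (a + real j + 1)))
           = (\<lambda>j. cnj (N_coeffs a f j * inverse (1 - z) ^ j))"
proof -
  have "cnj z - 1 \<noteq> 0"
    using assms by (metis complex_cnj_cnj complex_cnj_one right_minus_eq)
  then have "1 - cnj z / (cnj z - 1) = cnj (inverse (1 - z))"
    by (simp add: field_simps)
  then show ?thesis by (simp add: N_coeffs_def mult.commute)
qed

lemma N_ROC_reflected_eq_interior_powser:
  "N_ROC_reflected a f = interior {z. z \<noteq> 1 \<and> summable (\<lambda>j. N_coeffs a f j * inverse (1 - z) ^ j)}"
proof -
  have "summable (\<lambda>j. (1 - cnj z / (cnj z - 1)) ^ j * complex_of_real (f (a + real j + 1)))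
          \<longleftrightarrow> summable (\<lambda>j. N_coeffs a f j * inverse (1 - z) ^ j)" if "z \<noteq> 1" for z
    by (simp only: N_reflected_terms_eq_cnj[OF that, where f = f and a = a] summable_cnj_iff)
  then have "{z. z \<noteq> 1 \<and> summable (\<lambda>j. (1 - cnj z / (cnj z - 1)) ^ j * complex_of_real (f (a + real j + 1)))}
      = {z. z \<noteq> 1 \<and> summable (\<lambda>j. N_coeffs a f j * inverse (1 - z) ^ j)}"
    by blast
  then show ?thesis
    by (simp only: N_ROC_reflected_def)
qed

lemma cnj_N_transform_reflected:
  assumes "z \<in> N_ROC_reflected a f"
  shows "cnj (N_transform a f (cnj z / (cnj z - 1))) = (\<Sum>j. N_coeffs a f j * inverse (1 - z) ^ j)"
proof -
  have "z \<noteq> 1" "summable (\<lambda>j. N_coeffs a f j * inverse (1 - z) ^ j)"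
    using assms interior_subset by (auto simp: N_ROC_reflected_eq_interior_powser)
  then show ?thesis
    unfolding N_transform_def N_reflected_terms_eq_cnj[OF \<open>z \<noteq> 1\<close>]
    by (simp only: suminf_cnj complex_cnj_cnj)
qed

lemma norm_less_conv_radius_N_ROC:
  assumes "z \<in> N_ROC a f"
  shows "ereal (norm (1 - z)) < conv_radius (N_coeffs a f)"
proof (rule norm_less_conv_radius_if_open)
  let ?S = "{s. summable (\<lambda>j. N_coeffs a f j * (1 - s) ^ j)}"
  show "open ((\<lambda>s. 1 - s) ` interior ?S)"
    by (intro open_neg_translation open_interior)
  show "1 - z \<in> (\<lambda>s. 1 - s) ` interior ?S"
    using assms by (simp add: N_ROC_eq_interior_powser)
  show "summable (\<lambda>j. N_coeffs a f j * u ^ j)" if "u \<in> (\<lambda>s. 1 - s) ` interior ?S" for u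
    using that interior_subset by fastforce
qed

lemma norm_less_conv_radius_N_ROC_reflected:
  assumes "z \<in> N_ROC_reflected a f"
  shows "ereal (norm (inverse (1 - z))) < conv_radius (N_coeffs a f)"
proof (rule norm_less_conv_radius_if_open)
  let ?S = "{z. z \<noteq> 1 \<and> summable (\<lambda>j. N_coeffs a f j * inverse (1 - z) ^ j)}"
  show "open ((\<lambda>z. inverse (1 - z)) ` interior ?S)"
    using interior_subset by (intro open_image_inverse_one_minus open_interior) blast
  show "inverse (1 - z) \<in> (\<lambda>z. inverse (1 - z)) ` interior ?S"
    using assms by (simp add: N_ROC_reflected_eq_interior_powser)
  show "summable (\<lambda>j. N_coeffs a f j * u ^ j)" if "u \<in> (\<lambda>z. inverse (1 - z)) ` interior ?S" for u
    using that interior_subset by fastforce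
qed

lemma compact_subset_N_ROC_annulus:
  assumes K: "compact K" "K \<noteq> {}" and ROC: "K \<subseteq> N_ROC a x \<inter> N_ROC_reflected a y"
  obtains r R where "0 < r" "K \<subseteq> annulus 1 r R"
    "summable (\<lambda>j. norm (N_coeffs a x j) * R ^ j)"
    "summable (\<lambda>j. norm (N_coeffs a y j) * inverse r ^ j)"
proof -
  have "1 \<notin> K"
  proof
    assume "1 \<in> K"
    then have "1 \<in> interior {z. z \<noteq> 1 \<and> summable (\<lambda>j. N_coeffs a y j * inverse (1 - z) ^ j)}"
      using ROC by (auto simp: N_ROC_reflected_eq_interior_powser)
    then show False
      using interior_subset by blast
  qed
  have "ereal (norm (1 - z)) < conv_radius (N_coeffs a x)" if "z \<in> K" for z
    using ROC that by (intro norm_less_conv_radius_N_ROC) blast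
  then obtain R where R: "\<And>z. z \<in> K \<Longrightarrow> norm (1 - z) < R"
    and x: "summable (\<lambda>j. norm (N_coeffs a x j) * R ^ j)"
    using powser_abs_summable_beyond_compact[OF K continuous_on_op_minus] by blast
  have "continuous_on K (\<lambda>z. inverse (1 - z))"
    using \<open>1 \<notin> K\<close> by (intro continuous_intros) auto
  moreover have "ereal (norm (inverse (1 - z))) < conv_radius (N_coeffs a y)" if "z \<in> K" for z
    using ROC that by (intro norm_less_conv_radius_N_ROC_reflected) blast
  ultimately obtain \<rho> where \<rho>: "\<And>z. z \<in> K \<Longrightarrow> norm (inverse (1 - z)) < \<rho>"
    and y: "summable (\<lambda>j. norm (N_coeffs a y j) * \<rho> ^ j)"
    using powser_abs_summable_beyond_compact[OF K] by blast
  have "0 < \<rho>"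
    using \<rho> K(2) by (metis all_not_in_conv norm_ge_zero le_less_trans)
  moreover have "K \<subseteq> annulus 1 (inverse \<rho>) R"
  proof
    fix z assume z: "z \<in> K"
    then have "0 < norm (1 - z)" using \<open>1 \<notin> K\<close> by auto
    moreover have "inverse (norm (1 - z)) < inverse (inverse \<rho>)"
      using \<rho>[OF z] by (simp add: norm_inverse)
    ultimately have "inverse \<rho> < norm (1 - z)"
      by (rule inverse_less_imp_less[rotated])
    with R[OF z] show "z \<in> annulus 1 (inverse \<rho>) R"
      by (simp add: annulus_def dist_norm)
  qed
  ultimately show ?thesis
    using x y by (intro that[of "inverse \<rho>" R]) auto
qed

theorem theorem13:
  fixes a :: real and x y :: "real \<Rightarrow> real" and c :: "real \<Rightarrow> complex"
  assumes "valid_path c" and "pathfinish c = pathstart c"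
    and "1 \<notin> path_image c"
    and "winding_number c 1 = -1"
    and "path_image c \<subseteq> N_ROC a x \<inter> N_ROC_reflected a y"
  shows "(\<lambda>j. complex_of_real (x (a + real j + 1) * y (a + real j + 1))) sums
           (1 / (2 * pi * \<i>) * contour_integral c
              (\<lambda>z. N_transform a x z * cnj (N_transform a y (cnj z / (cnj z - 1))) * inverse (1 - z)))"
proof -
  let ?F = "\<lambda>z. N_transform a x z * cnj (N_transform a y (cnj z / (cnj z - 1))) * inverse (1 - z)"
  let ?L = "\<lambda>z. (\<Sum>j. N_coeffs a x j * (1 - z) ^ j) * (\<Sum>j. N_coeffs a y j * inverse (1 - z) ^ j)
                 * inverse (1 - z)"
  have K: "compact (path_image c)" "path_image c \<noteq> {}"
    using assms(1) by (auto simp: compact_valid_path_image path_image_nonempty)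
  obtain r R where "0 < r" "path_image c \<subseteq> annulus 1 r R"
    "summable (\<lambda>j. norm (N_coeffs a x j) * R ^ j)"
    "summable (\<lambda>j. norm (N_coeffs a y j) * inverse r ^ j)"
    by (rule compact_subset_N_ROC_annulus[OF K assms(5)])
  then have "(\<lambda>j. 2 * pi * \<i> * (N_coeffs a x j * N_coeffs a y j)) sums contour_integral c ?L"
    using sums_contour_integral_laurent_product[OF assms(1,2)] assms(4) by simp
  also have "contour_integral c ?L = contour_integral c ?F"
  proof (rule contour_integral_eq)
    fix z assume "z \<in> path_image c"
    then have "z \<in> N_ROC_reflected a y" using assms(5) by blast
    then show "?L z = ?F z"
      by (simp only: cnj_N_transform_reflected N_transform_eq_powser[of a x z])
  qed
  finally have "(\<lambda>j. 2 * pi * \<i> * (N_coeffs a x j * N_coeffs a y j) / (2 * pi * \<i>)) sums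
                  (contour_integral c ?F / (2 * pi * \<i>))"
    by (rule sums_divide)
  then show ?thesis
    by (simp add: N_coeffs_def)
qed

end
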